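(* Let $T\colon\mathscr C\to\mathscr C$ be a homeomorphism of the Cantor set with exactly one fixed point $x^0$ such that for every $x\ne x^0$ and every $m\in\mathbb N$ the set $\{T^{mk}(x):k\in\mathbb Z\}$ is dense in $\mathscr C$. Let $\mathscr C=A\sqcup B$ be a partition into clopen sets with $x^0\in A$. Let $\hat X=A\times\{0,1\}\sqcup B\times\{0\}$ and define $f\colon\hat X\to\hat X$ by $f(x,i)=(T(x),1)$ if $i=0$ and $T(x)\in A$, and $f(x,i)=(T(x),0)$ otherwise. For $x\in\mathscr C$ let $N(x,B)=\min\{k\in\mathbb N_0: T^{-k}(x)\in B\}$ (with $N(x,B)=\infty$ if no such $k$ exists), let $U=\{x\in\mathscr C: N(x,B)<\infty\}$, let $X=\overline{\{(x,N(x,B)\bmod 2):x\in U\}}$ (closure in $\hat X$), and let $\pi\colon\hat X\to\mathscr C$ be $\pi(x,i)=x$. Then $f(X)=X$, and for every $(x,i)\in X\setminus\pi^{-1}(x^0)$, every $m\in\mathbb N$, and every full orbit $(y_k)_{k\in\mathbb Z}$ of $(x,i)$ in $X$ (i.e. $y_k\in X$, $y_0=(x,i)$, $f(y_k)=y_{k+1}$ for all $k$), we have $\overline{\{y_{mk}:k\in\mathbb Z\}}=X$.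
   Context: $\mathscr C$ denotes the Cantor set; $\mathbb N_0=\{0,1,2,\dots\}$. *)

theory Defs
  imports "HOL-Analysis.Analysis"
begin

definition cantor_set :: "real set" where
  "cantor_set = range (\<lambda>a::nat \<Rightarrow> bool. \<Sum>n. (if a n then 2 else 0) / 3 ^ (Suc n))"

definition zpow :: "('a \<Rightarrow> 'a) \<Rightarrow> ('a \<Rightarrow> 'a) \<Rightarrow> int \<Rightarrow> 'a \<Rightarrow> 'a" where
  "zpow T Tinv k = (if k \<ge> 0 then T ^^ nat k else Tinv ^^ nat (- k))"

definition skew_f :: "real set \<Rightarrow> (real \<Rightarrow> real) \<Rightarrow> real \<times> nat \<Rightarrow> real \<times> nat" where
  "skew_f A T = (\<lambda>(x, i). if i = 0 \<and> T x \<in> A then (T x, 1) else (T x, 0))"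

definition hatX :: "real set \<Rightarrow> real set \<Rightarrow> (real \<times> nat) set" where
  "hatX A B = A \<times> {0, 1} \<union> B \<times> {0}"

text \<open>Set U of points with finite N(x,B), and N(x,B) itself (meaningful on U).\<close>
definition U_set :: "(real \<Rightarrow> real) \<Rightarrow> real set \<Rightarrow> real set" where
  "U_set Tinv B = {x \<in> cantor_set. \<exists>k::nat. (Tinv ^^ k) x \<in> B}"

definition N_B :: "(real \<Rightarrow> real) \<Rightarrow> real set \<Rightarrow> real \<Rightarrow> nat" where
  "N_B Tinv B x = (LEAST k::nat. (Tinv ^^ k) x \<in> B)"

definition X_set :: "(real \<Rightarrow> real) \<Rightarrow> real set \<Rightarrow> (real \<times> nat) set" where
  "X_set Tinv B = closure {(x, N_B Tinv B x mod 2) | x. x \<in> U_set Tinv B}"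

end

theory Submission
  imports Defs
begin

text \<open>The first entry time N(x,B) into B under T\<inverse> is locally constant on the open set U, so above U
  the set X is just the graph of N mod 2, and f maps graph points to graph points. Density of every
  m-subsequence of a full orbit in X is then inherited from density of the T^m-orbit of its first
  coordinate in the Cantor set. For surjectivity, f(X) is compact and contains all graph points over
  T(U); a remaining graph point (z, 0) with z \<in> B lies in B and has no earlier visits to B, so the
  points of its orbit close to z, which exist because the Cantor set is perfect, are forward iterates
  T^k z \<in> B with k \<ge> 1 and hence images of graph points.\<close>

definition cantor_term :: "(nat \<Rightarrow> bool) \<Rightarrow> nat \<Rightarrow> real" where
  "cantor_term a n = (if a n then 2 else 0) / 3 ^ Suc n"

definition cantor_point :: "(nat \<Rightarrow> bool) \<Rightarrow> real" where
  "cantor_point a = (\<Sum>n. cantor_term a n)"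

lemma cantor_set_eq_range: "cantor_set = range cantor_point"
  unfolding cantor_set_def cantor_point_def cantor_term_def by simp

lemma sums_thirds_tail: "(\<lambda>n. 2 / 3 ^ Suc (n + M) :: real) sums (1/3) ^ M"
proof -
  have "(\<lambda>n. (2 * (1/3) ^ Suc M) * (1/3) ^ n :: real) sums ((2 * (1/3) ^ Suc M) * (1 / (1 - 1/3)))"
    by (intro sums_mult geometric_sums) simp
  then show ?thesis
    by (simp add: power_add power_divide field_simps)
qed

lemma tail_bounded_by_thirds:
  fixes g :: "nat \<Rightarrow> real"
  assumes "\<And>n. \<bar>g n\<bar> \<le> 2 / 3 ^ Suc n"
  shows "summable (\<lambda>n. g (n + M))" and "\<bar>\<Sum>n. g (n + M)\<bar> \<le> (1/3) ^ M"
proof -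
  have bound: "norm (g (n + M)) \<le> 2 / 3 ^ Suc (n + M)" for n
    using assms by simp
  show "summable (\<lambda>n. g (n + M))"
    using summable_comparison_test'[OF sums_summable[OF sums_thirds_tail] bound] .
  have "\<bar>\<Sum>n. g (n + M)\<bar> \<le> (\<Sum>n. 2 / 3 ^ Suc (n + M))"
    using norm_suminf_le[OF bound sums_summable[OF sums_thirds_tail]] by simp
  also have "\<dots> = (1/3) ^ M"
    by (rule sums_unique[OF sums_thirds_tail, symmetric])
  finally show "\<bar>\<Sum>n. g (n + M)\<bar> \<le> (1/3) ^ M" .
qed

lemma cantor_term_diff_bound: "\<bar>cantor_term a n - cantor_term b n\<bar> \<le> 2 / 3 ^ Suc n"
  by (simp add: cantor_term_def)

lemma summable_cantor_term: "summable (cantor_term a)"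
proof -
  have "summable (\<lambda>n. cantor_term a (n + 0))"
    by (rule tail_bounded_by_thirds(1)) (simp add: cantor_term_def)
  then show ?thesis
    by simp
qed

lemma cantor_point_diff_split:
  "cantor_point a - cantor_point b
     = (\<Sum>n. cantor_term a (n + M) - cantor_term b (n + M)) + (\<Sum>n<M. cantor_term a n - cantor_term b n)"
proof -
  have "cantor_point a - cantor_point b = (\<Sum>n. cantor_term a n - cantor_term b n)"
    unfolding cantor_point_def by (intro suminf_diff summable_cantor_term)
  also have "\<dots> = (\<Sum>n. cantor_term a (n + M) - cantor_term b (n + M)) + (\<Sum>n<M. cantor_term a n - cantor_term b n)"
    by (intro suminf_split_initial_segment summable_diff summable_cantor_term)
  finally show ?thesis .
qed

lemma cantor_tail_dist_le:
  "\<bar>\<Sum>n. cantor_term a (n + M) - cantor_term b (n + M)\<bar> \<le> (1/3) ^ M"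
  by (rule tail_bounded_by_thirds(2)[of "\<lambda>n. cantor_term a n - cantor_term b n" M])
    (rule cantor_term_diff_bound)

lemma cantor_point_dist_le:
  assumes "\<And>n. n < M \<Longrightarrow> a n = b n"
  shows "\<bar>cantor_point a - cantor_point b\<bar> \<le> (1/3) ^ M"
proof -
  have "(\<Sum>n<M. cantor_term a n - cantor_term b n) = 0"
    using assms by (intro sum.neutral) (simp add: cantor_term_def)
  then show ?thesis
    using cantor_point_diff_split[of a b M] cantor_tail_dist_le[of a M b] by simp
qed

lemma cantor_point_dist_ge:
  assumes "\<And>n. n < M \<Longrightarrow> a n = b n" and "a M \<noteq> b M"
  shows "\<bar>cantor_point a - cantor_point b\<bar> \<ge> (1/3) ^ Suc M"
proof -
  define tail where "tail = (\<Sum>n. cantor_term a (n + Suc M) - cantor_term b (n + Suc M))"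
  have "(\<Sum>n<M. cantor_term a n - cantor_term b n) = 0"
    using assms(1) by (intro sum.neutral) (simp add: cantor_term_def)
  then have "(\<Sum>n<Suc M. cantor_term a n - cantor_term b n) = cantor_term a M - cantor_term b M"
    by simp
  then have "cantor_point a - cantor_point b = tail + (cantor_term a M - cantor_term b M)"
    using cantor_point_diff_split[of a b "Suc M"] by (simp add: tail_def)
  moreover have "\<bar>tail\<bar> \<le> (1/3) ^ Suc M"
    unfolding tail_def by (rule cantor_tail_dist_le)
  moreover have "\<bar>cantor_term a M - cantor_term b M\<bar> = 2 * (1/3) ^ Suc M"
    using assms(2) by (cases "a M") (auto simp: cantor_term_def power_divide)
  moreover have "c \<le> \<bar>t + h\<bar>" if "\<bar>t\<bar> \<le> c" "\<bar>h\<bar> = 2 * c" for t h c :: real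
    using that by linarith
  ultimately show ?thesis
    by metis
qed

lemma cantor_point_close_imp_digits_eq:
  assumes "\<bar>cantor_point a - cantor_point b\<bar> < (1/3) ^ Suc M" and "n \<le> M"
  shows "a n = b n"
proof (rule ccontr)
  assume "a n \<noteq> b n"
  define k where "k = (LEAST k. a k \<noteq> b k)"
  have "a k \<noteq> b k"
    unfolding k_def by (rule LeastI) fact
  moreover have "k \<le> n"
    unfolding k_def by (rule Least_le) fact
  moreover have "\<And>j. j < k \<Longrightarrow> a j = b j"
    unfolding k_def using not_less_Least by blast
  ultimately have "(1/3) ^ Suc k \<le> \<bar>cantor_point a - cantor_point b\<bar>"
    by (intro cantor_point_dist_ge)
  moreover have "(1/3::real) ^ Suc M \<le> (1/3) ^ Suc k"
    using \<open>k \<le> n\<close> assms(2) by (intro power_decreasing) auto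
  ultimately show False using assms(1) by linarith
qed

lemma ex_thirds_power_less: "0 < (e::real) \<Longrightarrow> \<exists>N. (1/3::real) ^ N < e"
  using real_arch_pow_inv[of e "1/3"] by auto

text \<open>A convergent sequence of points of the Cantor set has eventually stable digits, and the
  limit is the point with the stable digits.\<close>
lemma closed_cantor_set: "closed cantor_set"
  unfolding closed_sequential_limits
proof (intro allI impI, elim conjE)
  fix x :: "nat \<Rightarrow> real" and l
  assume "\<forall>n. x n \<in> cantor_set" and lim: "x \<longlonglongrightarrow> l"
  then have "\<forall>n. \<exists>a. x n = cantor_point a"
    unfolding cantor_set_eq_range by auto
  then obtain d where d: "\<And>n. x n = cantor_point (d n)"
    by metis
  have "\<exists>J. \<forall>j\<ge>J. \<forall>k\<ge>J. norm (x j - x k) < (1/3::real) ^ Suc N" for N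
    using CauchyD[OF LIMSEQ_imp_Cauchy[OF lim], of "(1/3) ^ Suc N"] by simp
  then obtain J where J: "\<And>N j k. j \<ge> J N \<Longrightarrow> k \<ge> J N \<Longrightarrow> norm (x j - x k) < (1/3::real) ^ Suc N"
    by metis
  define a where "a n = d (J n) n" for n
  define K where "K N = Max (J ` {..N})" for N
  have stable: "d j n = a n" if "j \<ge> K N" "n \<le> N" for j n N
  proof -
    have "J n \<le> K N"
      unfolding K_def using that(2) by (intro Max_ge) auto
    then have "\<bar>cantor_point (d j) - cantor_point (d (J n))\<bar> < (1/3) ^ Suc n"
      using J[of n j "J n"] that(1) by (simp add: d)
    then show ?thesis
      unfolding a_def by (rule cantor_point_close_imp_digits_eq) simp
  qed
  have "x \<longlonglongrightarrow> cantor_point a"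
  proof (rule LIMSEQ_I)
    fix r :: real
    assume "0 < r"
    then obtain N where N: "(1/3::real) ^ N < r"
      using ex_thirds_power_less by blast
    have "norm (x j - cantor_point a) < r" if "j \<ge> K N" for j
      using cantor_point_dist_le[of N "d j" a] stable[OF that] N by (simp add: d)
    then show "\<exists>no. \<forall>n\<ge>no. norm (x n - cantor_point a) < r"
      by blast
  qed
  then show "l \<in> cantor_set"
    using lim LIMSEQ_unique unfolding cantor_set_eq_range by blast
qed

lemma bounded_cantor_set: "bounded cantor_set"
proof -
  have "\<bar>cantor_point a\<bar> \<le> 1" for a
    using cantor_point_dist_le[of 0 a "\<lambda>_. False"] by (simp add: cantor_point_def cantor_term_def)
  then show ?thesis
    unfolding cantor_set_eq_range bounded_iff by auto
qed

lemma compact_cantor_set: "compact cantor_set"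
  using bounded_cantor_set closed_cantor_set compact_eq_bounded_closed by blast

lemma cantor_set_perfect:
  assumes "x \<in> cantor_set"
  shows "x islimpt cantor_set"
  unfolding islimpt_approachable
proof (intro allI impI)
  fix e :: real
  assume "0 < e"
  obtain a where x: "x = cantor_point a"
    using assms unfolding cantor_set_eq_range by auto
  obtain N where N: "(1/3::real) ^ N < e"
    using ex_thirds_power_less \<open>0 < e\<close> by blast
  define b where "b = a(N := \<not> a N)"
  have "(1/3) ^ Suc N \<le> \<bar>cantor_point b - cantor_point a\<bar>"
    by (rule cantor_point_dist_ge) (auto simp: b_def)
  moreover have "(0::real) < (1/3) ^ Suc N"
    by simp
  ultimately have "0 < \<bar>cantor_point b - cantor_point a\<bar>"
    by linarith
  moreover have "\<bar>cantor_point b - cantor_point a\<bar> \<le> (1/3) ^ N"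
    by (rule cantor_point_dist_le) (auto simp: b_def)
  ultimately show "\<exists>x'\<in>cantor_set. x' \<noteq> x \<and> dist x' x < e"
    using N unfolding x cantor_set_eq_range dist_real_def
    by (intro bexI[of _ "cantor_point b"]) auto
qed

lemma mem_closure_Times_discrete_iff:
  fixes x :: "'a::metric_space" and j :: "'b::discrete_topology"
  shows "(x, j) \<in> closure R \<longleftrightarrow> (\<forall>e>0. \<exists>v. (v, j) \<in> R \<and> dist v x < e)"
proof
  assume "(x, j) \<in> closure R"
  show "\<forall>e>0. \<exists>v. (v, j) \<in> R \<and> dist v x < e"
  proof (intro allI impI)
    fix e :: real
    assume "e > 0"
    have "open (ball x e \<times> {j})"
      by (intro open_Times open_ball open_discrete)
    moreover have "(x, j) \<in> (ball x e \<times> {j}) \<inter> closure R"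
      using \<open>(x, j) \<in> closure R\<close> \<open>e > 0\<close> by simp
    ultimately have "(ball x e \<times> {j}) \<inter> R \<noteq> {}"
      using open_Int_closure_eq_empty by blast
    then show "\<exists>v. (v, j) \<in> R \<and> dist v x < e"
      by (auto simp: dist_commute)
  qed
next
  assume approx: "\<forall>e>0. \<exists>v. (v, j) \<in> R \<and> dist v x < e"
  show "(x, j) \<in> closure R"
    unfolding closure_iff_nhds_not_empty
  proof (intro allI impI)
    fix Q P
    assume "P \<subseteq> Q" "open P" "(x, j) \<in> P"
    then obtain P1 P2 where P: "open P1" "(x, j) \<in> P1 \<times> P2" "P1 \<times> P2 \<subseteq> P"
      using open_prod_elim by metis
    then obtain e where "e > 0" "ball x e \<subseteq> P1"
      using open_contains_ball by blast
    then obtain v where "(v, j) \<in> R" "dist v x < e"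
      using approx by blast
    then have "v \<in> P1"
      using \<open>ball x e \<subseteq> P1\<close> by (auto simp: dist_commute)
    then show "R \<inter> Q \<noteq> {}"
      using P \<open>(v, j) \<in> R\<close> \<open>P \<subseteq> Q\<close> by blast
  qed
qed

lemma funpow_in_homeomorphism:
  assumes "homeomorphism S S T Tinv" and "x \<in> S"
  shows "(T ^^ n) x \<in> S" and "(Tinv ^^ n) x \<in> S"
  using assms unfolding homeomorphism_def by (induction n) auto

lemma zpow_in_homeomorphism:
  assumes "homeomorphism S S T Tinv" and "x \<in> S"
  shows "zpow T Tinv k x \<in> S"
  using funpow_in_homeomorphism[OF assms] by (simp add: zpow_def)

lemma continuous_on_funpow:
  assumes "continuous_on S g" and "g ` S \<subseteq> S"
  shows "continuous_on S (g ^^ n)"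
proof (induction n)
  case (Suc n)
  have "(g ^^ n) ` S \<subseteq> S"
    using assms(2) by (induction n) auto
  then show ?case
    using continuous_on_compose2[OF assms(1) Suc] by simp
qed (simp add: continuous_on_id)

lemma orbit_eq_zpow:
  assumes homeo: "homeomorphism S S T Tinv"
    and in_S: "\<And>k. z k \<in> S" and step: "\<And>k. z (k + 1) = T (z k)"
  shows "z k = zpow T Tinv k (z 0)"
proof -
  have forward: "z (int n) = (T ^^ n) (z 0)" for n
  proof (induction n)
    case (Suc n)
    then show ?case
      using step[of "int n"] by (simp add: add.commute)
  qed simp
  have backward: "z (- int n) = (Tinv ^^ n) (z 0)" for n
  proof (induction n)
    case (Suc n)
    have "T (z (- int (Suc n))) = (Tinv ^^ n) (z 0)"
      using step[of "- int (Suc n)"] Suc by simp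
    then have "z (- int (Suc n)) = Tinv ((Tinv ^^ n) (z 0))"
      using homeo in_S unfolding homeomorphism_def by metis
    then show ?case
      by simp
  qed simp
  show ?thesis
  proof (cases "k \<ge> 0")
    case True
    then show ?thesis
      using forward[of "nat k"] by (simp add: zpow_def)
  next
    case False
    then show ?thesis
      using backward[of "nat (- k)"] by (simp add: zpow_def)
  qed
qed

locale skew_extension =
  fixes T Tinv :: "real \<Rightarrow> real" and x0 :: real and A B :: "real set"
  assumes homeo: "homeomorphism cantor_set cantor_set T Tinv"
    and minimal: "\<And>x m. x \<in> cantor_set \<Longrightarrow> x \<noteq> x0 \<Longrightarrow> m \<ge> (1::nat) \<Longrightarrow>
         cantor_set \<subseteq> closure {zpow T Tinv (int m * k) x | k::int. True}"
    and partition: "A \<union> B = cantor_set" "A \<inter> B = {}"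
    and A_open: "openin (top_of_set cantor_set) A"
    and B_open: "openin (top_of_set cantor_set) B"
    and x0_in_A: "x0 \<in> A"
begin

abbreviation "C \<equiv> cantor_set"
abbreviation "U \<equiv> U_set Tinv B"
abbreviation "N \<equiv> N_B Tinv B"
abbreviation "X \<equiv> X_set Tinv B"
abbreviation "f \<equiv> skew_f A T"
abbreviation "graph \<equiv> {(x, N x mod 2) | x. x \<in> U}"

lemma T_in: "x \<in> C \<Longrightarrow> T x \<in> C"
  and Tinv_in: "x \<in> C \<Longrightarrow> Tinv x \<in> C"
  and Tinv_T: "x \<in> C \<Longrightarrow> Tinv (T x) = x"
  and T_Tinv: "x \<in> C \<Longrightarrow> T (Tinv x) = x"
  and continuous_on_T: "continuous_on C T"
  and continuous_on_Tinv: "continuous_on C Tinv"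
  using homeo unfolding homeomorphism_def by auto

lemma U_subset: "U \<subseteq> C"
  by (auto simp: U_set_def)

lemma B_subset: "B \<subseteq> C"
  using partition(1) by blast

lemma U_iff:
  assumes "x \<in> C"
  shows "x \<in> U \<longleftrightarrow> x \<in> B \<or> Tinv x \<in> U"
proof -
  have ex_nat_split: "(\<exists>k::nat. P k) \<longleftrightarrow> P 0 \<or> (\<exists>k. P (Suc k))" for P
    by (metis not0_implies_Suc)
  show ?thesis
    unfolding U_set_def using assms Tinv_in ex_nat_split[of "\<lambda>k. (Tinv ^^ k) x \<in> B"]
    by (simp add: funpow_Suc_right del: funpow.simps)
qed

lemma funpow_N_in_B: "x \<in> U \<Longrightarrow> (Tinv ^^ N x) x \<in> B"
  unfolding U_set_def N_B_def by (auto intro: LeastI)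

lemma funpow_less_N_in_A: "x \<in> U \<Longrightarrow> k < N x \<Longrightarrow> (Tinv ^^ k) x \<in> A"
  using not_less_Least[of k "\<lambda>k. (Tinv ^^ k) x \<in> B"] funpow_in_homeomorphism(2)[OF homeo]
    partition U_subset
  unfolding N_B_def by blast

lemma N_eqI:
  assumes "x \<in> C" and "(Tinv ^^ n) x \<in> B" and "\<And>k. k < n \<Longrightarrow> (Tinv ^^ k) x \<in> A"
  shows "x \<in> U" and "N x = n"
proof -
  show "x \<in> U"
    using assms(1,2) unfolding U_set_def by blast
  show "N x = n"
    unfolding N_B_def using assms(2,3) partition(2)
    by (intro Least_equality) (auto simp: not_less[symmetric])
qed

lemma N_eq_0_if_in_B: "x \<in> B \<Longrightarrow> N x = 0"
  by (simp add: N_B_def)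

lemma N_locally_constant:
  assumes "z \<in> U"
  shows "\<exists>e>0. \<forall>w\<in>C. dist w z < e \<longrightarrow> w \<in> U \<and> N w = N z"
proof -
  define n where "n = N z"
  define D where "D k = (if k < n then A else B)" for k
  \<comment> \<open>the points whose backward itinerary up to time n is that of z: A, ..., A, B\<close>
  define W where "W = (\<Inter>k\<in>{..n}. C \<inter> (Tinv ^^ k) -` D k)"
  have "openin (top_of_set C) (D k)" for k
    by (simp add: D_def A_open B_open)
  then have "openin (top_of_set C) (C \<inter> (Tinv ^^ k) -` D k)" for k
    using funpow_in_homeomorphism(2)[OF homeo]
    by (intro continuous_openin_preimage[where T = C] continuous_on_funpow continuous_on_Tinv)
      (auto intro: Tinv_in)
  then have "openin (top_of_set C) W"
    unfolding W_def by (intro openin_INT2) simp_all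
  moreover have "z \<in> W"
    using assms U_subset funpow_N_in_B funpow_less_N_in_A
    unfolding W_def D_def n_def by (auto simp: le_less)
  ultimately obtain e where "e > 0" and e: "\<And>w. w \<in> C \<Longrightarrow> dist w z < e \<Longrightarrow> w \<in> W"
    unfolding openin_euclidean_subtopology_iff by blast
  have "w \<in> U \<and> N w = N z" if "w \<in> W" for w
  proof -
    have "w \<in> C" and w: "\<And>k. k \<le> n \<Longrightarrow> (Tinv ^^ k) w \<in> D k"
      using that unfolding W_def by auto
    have in_B: "(Tinv ^^ n) w \<in> B"
      using w[of n] by (simp add: D_def)
    have in_A: "(Tinv ^^ k) w \<in> A" if "k < n" for k
      using w[of k] that by (simp add: D_def)
    show ?thesis
      using N_eqI[OF \<open>w \<in> C\<close> in_B in_A] unfolding n_def by simp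
  qed
  with \<open>e > 0\<close> e show ?thesis
    by (intro exI[of _ e]) simp
qed

lemma T_in_U: "x \<in> U \<Longrightarrow> T x \<in> U"
  using U_iff[of "T x"] T_in Tinv_T U_subset by auto

lemma funpow_T_in_U: "x \<in> U \<Longrightarrow> (T ^^ k) x \<in> U"
  by (induction k) (simp_all add: T_in_U)

lemma N_T:
  assumes "x \<in> U"
  shows "N (T x) = (if T x \<in> B then 0 else Suc (N x))"
proof (cases "T x \<in> B")
  case True
  then show ?thesis
    by (simp add: N_eq_0_if_in_B)
next
  case False
  have "x \<in> C" "T x \<in> C"
    using assms U_subset T_in by auto
  then have shift: "(Tinv ^^ Suc k) (T x) = (Tinv ^^ k) x" for k
    by (simp add: funpow_Suc_right Tinv_T del: funpow.simps)
  have "(Tinv ^^ k) (T x) \<in> A" if "k < Suc (N x)" for k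
  proof (cases k)
    case 0
    then show ?thesis
      using False \<open>T x \<in> C\<close> partition(1) by auto
  next
    case (Suc j)
    then show ?thesis
      using that shift funpow_less_N_in_A[OF assms, of j] by simp
  qed
  then have "N (T x) = Suc (N x)"
    by (intro N_eqI(2)[OF \<open>T x \<in> C\<close>]) (simp_all add: shift funpow_N_in_B[OF assms] del: funpow.simps)
  then show ?thesis
    using False by simp
qed

lemma f_graph:
  assumes "x \<in> U"
  shows "f (x, N x mod 2) = (T x, N (T x) mod 2)"
proof -
  have "T x \<in> C"
    using assms U_subset T_in by auto
  then show ?thesis
    using partition N_T[OF assms] by (auto simp: skew_f_def mod_Suc)
qed

lemma fst_f: "fst (f p) = T (fst p)"
  by (cases p) (simp add: skew_f_def)

lemma f_graph_subset: "f ` graph \<subseteq> graph"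
  using f_graph T_in_U by fastforce

lemma graph_in_f_image:
  assumes "z \<in> C" and "Tinv z \<in> U"
  shows "(z, N z mod 2) \<in> f ` graph"
  using f_graph[OF assms(2)] T_Tinv[OF assms(1)] assms(2) by force

lemma X_eq_closure: "X = closure graph"
  unfolding X_set_def ..

lemma X_subset: "X \<subseteq> C \<times> {0, 1}"
proof -
  have "graph \<subseteq> C \<times> {0, 1}"
    using U_subset by (auto simp: mod2_eq_if)
  then show ?thesis
    unfolding X_eq_closure by (intro closure_minimal closed_Times closed_cantor_set) auto
qed

lemma compact_X: "compact X"
proof -
  have "compact (C \<times> {0::nat, 1})"
    by (intro compact_Times compact_cantor_set) auto
  then have "compact (C \<times> {0::nat, 1} \<inter> X)"
    by (simp add: X_eq_closure compact_Int_closed)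
  then show ?thesis
    using X_subset by (simp add: Int_absorb1)
qed

lemma X_fibre_over_U:
  assumes "(w, j) \<in> X" and "w \<in> U"
  shows "j = N w mod 2"
proof -
  obtain e where "e > 0" and e: "\<And>v. v \<in> C \<Longrightarrow> dist v w < e \<Longrightarrow> v \<in> U \<and> N v = N w"
    using N_locally_constant[OF assms(2)] by blast
  then obtain v where "(v, j) \<in> graph" and "dist v w < e"
    using assms(1) unfolding X_eq_closure mem_closure_Times_discrete_iff by blast
  then show ?thesis
    using e U_subset by force
qed

lemma continuous_on_f: "continuous_on (C \<times> UNIV) f"
proof -
  define g where "g p = (T (fst p), snd p)" for p :: "real \<times> nat"
  define P where "P = A \<times> {0::nat}"
  define Q where "Q = B \<times> UNIV \<union> C \<times> (UNIV - {0::nat})"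
  define S1 where "S1 = (C \<times> UNIV) \<inter> g -` P"
  define S2 where "S2 = (C \<times> UNIV) \<inter> g -` Q"
  have cont_T_fst: "continuous_on (C \<times> UNIV) (\<lambda>p. T (fst p))"
    by (rule continuous_on_compose2[OF continuous_on_T continuous_on_fst[OF continuous_on_id]]) auto
  then have cont_g: "continuous_on (C \<times> UNIV) g"
    unfolding g_def by (intro continuous_on_Pair continuous_on_snd continuous_on_id)
  have g_in: "g \<in> C \<times> UNIV \<rightarrow> C \<times> UNIV"
    using T_in by (auto simp: g_def)
  have cover: "S1 \<union> S2 = C \<times> UNIV"
    using partition T_in by (auto simp: S1_def S2_def P_def Q_def g_def)
  have "openin (top_of_set (C \<times> UNIV)) P"
    unfolding P_def by (intro openin_Times A_open) (simp add: open_discrete)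
  then have "openin (top_of_set (C \<times> UNIV)) S1"
    unfolding S1_def by (rule continuous_openin_preimage[OF cont_g g_in])
  then have open_S1: "openin (top_of_set (S1 \<union> S2)) S1"
    by (simp add: cover)
  have "openin (top_of_set (C \<times> UNIV)) Q"
    unfolding Q_def
    by (intro openin_Un openin_Times B_open openin_subtopology_self) (simp add: open_discrete)
  then have "openin (top_of_set (C \<times> UNIV)) S2"
    unfolding S2_def by (rule continuous_openin_preimage[OF cont_g g_in])
  then have open_S2: "openin (top_of_set (S1 \<union> S2)) S2"
    by (simp add: cover)
  have cont_pair: "continuous_on S (\<lambda>p. (T (fst p), c))" if "S \<subseteq> C \<times> UNIV" for S and c :: nat
    using continuous_on_subset[OF continuous_on_Pair[OF cont_T_fst continuous_on_const] that] .
  have "P \<inter> Q = {}"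
    using partition(2) by (auto simp: P_def Q_def)
  then have "continuous_on (S1 \<union> S2) (\<lambda>p. if g p \<in> P then (T (fst p), 1::nat) else (T (fst p), 0))"
    by (intro continuous_on_cases_local_open open_S1 open_S2 cont_pair)
      (auto simp: S1_def S2_def)
  moreover have "f p = (if g p \<in> P then (T (fst p), 1) else (T (fst p), 0))" for p
    by (cases p) (simp add: skew_f_def g_def P_def)
  ultimately show ?thesis
    by (simp add: cover)
qed

lemma X_subset_Times_UNIV: "X \<subseteq> C \<times> UNIV"
  using X_subset by blast

lemma f_X_subset: "f ` X \<subseteq> X"
  unfolding X_eq_closure
proof (rule image_closure_subset)
  show "continuous_on (closure graph) f"
    using continuous_on_subset[OF continuous_on_f X_subset_Times_UNIV] by (simp add: X_eq_closure)
  show "f ` graph \<subseteq> closure graph"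
    using f_graph_subset closure_subset by blast
qed simp

lemma orbit_limpt:
  assumes "x \<in> C" and "x \<noteq> x0"
  shows "x islimpt {zpow T Tinv k x | k. True}"
proof -
  have "C \<subseteq> closure {zpow T Tinv k x | k. True}"
    using minimal[OF assms, of 1] by simp
  then show ?thesis
    using islimpt_subset[OF cantor_set_perfect[OF assms(1)]] limpt_of_closure by blast
qed

lemma Tinv_zpow_in_U:
  assumes "z \<in> U" and "Tinv z \<notin> U" and "zpow T Tinv k z \<in> B" and "zpow T Tinv k z \<noteq> z"
  shows "Tinv (zpow T Tinv k z) \<in> U"
proof -
  have "z \<in> C"
    using U_subset \<open>z \<in> U\<close> ..
  have "k \<noteq> 0"
    using assms(4) by (auto simp: zpow_def)
  have "0 < k"
  proof (rule ccontr)
    assume "\<not> 0 < k"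
    with \<open>k \<noteq> 0\<close> obtain j where "nat (- k) = Suc j"
      by (cases "nat (- k)") auto
    then have "(Tinv ^^ j) (Tinv z) \<in> B"
      using assms(3) \<open>\<not> 0 < k\<close> \<open>k \<noteq> 0\<close>
      by (simp add: zpow_def funpow_Suc_right del: funpow.simps)
    then show False
      using assms(2) Tinv_in[OF \<open>z \<in> C\<close>] unfolding U_set_def by blast
  qed
  then obtain j where "nat k = Suc j"
    by (metis gr0_implies_Suc zero_less_nat_eq)
  then have "zpow T Tinv k z = T ((T ^^ j) z)"
    using \<open>0 < k\<close> by (simp add: zpow_def)
  then have "Tinv (zpow T Tinv k z) = (T ^^ j) z"
    using Tinv_T funpow_in_homeomorphism(1)[OF homeo \<open>z \<in> C\<close>] by simp
  then show ?thesis
    using funpow_T_in_U[OF \<open>z \<in> U\<close>] by simp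
qed

lemma graph_subset_closure_f_image: "graph \<subseteq> closure (f ` graph)"
proof
  fix p
  assume "p \<in> graph"
  then obtain z where p: "p = (z, N z mod 2)" and "z \<in> U"
    by blast
  have "z \<in> C"
    using U_subset \<open>z \<in> U\<close> ..
  show "p \<in> closure (f ` graph)"
  proof (cases "Tinv z \<in> U")
    case True
    then have "p \<in> f ` graph"
      using graph_in_f_image[OF \<open>z \<in> C\<close>] p by simp
    then show ?thesis
      by (rule subsetD[OF closure_subset])
  next
    case False
    then have "z \<in> B"
      using U_iff[OF \<open>z \<in> C\<close>] \<open>z \<in> U\<close> by blast
    then have "z \<noteq> x0"
      using x0_in_A partition(2) by blast
    have "(z, 0) \<in> closure (f ` graph)"
      unfolding mem_closure_Times_discrete_iff
    proof (intro allI impI)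
      fix e :: real
      assume "e > 0"
      obtain e1 where "e1 > 0" and e1: "\<And>w. w \<in> C \<Longrightarrow> dist w z < e1 \<Longrightarrow> w \<in> B"
        using B_open \<open>z \<in> B\<close> unfolding openin_euclidean_subtopology_iff by blast
      have "min e e1 > 0"
        using \<open>e > 0\<close> \<open>e1 > 0\<close> by simp
      then obtain k where "zpow T Tinv k z \<noteq> z" and close: "dist (zpow T Tinv k z) z < min e e1"
        using orbit_limpt[OF \<open>z \<in> C\<close> \<open>z \<noteq> x0\<close>] unfolding islimpt_approachable by blast
      define q where "q = zpow T Tinv k z"
      have "q \<in> B"
        using e1 close zpow_in_homeomorphism[OF homeo \<open>z \<in> C\<close>] by (simp add: q_def)
      then have "Tinv q \<in> U"
        using Tinv_zpow_in_U[OF \<open>z \<in> U\<close> False _ \<open>zpow T Tinv k z \<noteq> z\<close>] by (simp add: q_def)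
      moreover have "q \<in> C"
        using B_subset \<open>q \<in> B\<close> ..
      ultimately have "(q, N q mod 2) \<in> f ` graph"
        using graph_in_f_image by blast
      moreover have "dist q z < e"
        using close by (simp add: q_def)
      ultimately show "\<exists>v. (v, 0) \<in> f ` graph \<and> dist v z < e"
        using N_eq_0_if_in_B[OF \<open>q \<in> B\<close>] by auto
    qed
    then show ?thesis
      using p N_eq_0_if_in_B[OF \<open>z \<in> B\<close>] by simp
  qed
qed

lemma X_subset_f_X: "X \<subseteq> f ` X"
proof -
  have "closed (f ` X)"
    using continuous_on_subset[OF continuous_on_f X_subset_Times_UNIV] compact_X
    by (intro compact_imp_closed compact_continuous_image)
  moreover have "f ` graph \<subseteq> f ` X"
    unfolding X_eq_closure by (intro image_mono closure_subset)
  ultimately have "closure (f ` graph) \<subseteq> f ` X"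
    by (rule closure_minimal[rotated])
  moreover have "closure graph \<subseteq> closure (f ` graph)"
    by (rule closure_minimal[OF graph_subset_closure_f_image closed_closure])
  ultimately show ?thesis
    unfolding X_eq_closure by (rule order_trans[rotated])
qed

lemma f_X_eq: "f ` X = X"
  using f_X_subset X_subset_f_X by blast

lemma fst_orbit_eq_zpow:
  assumes orbit_in_X: "\<And>k. y k \<in> X" and orbit_step: "\<And>k. f (y k) = y (k + 1)"
  shows "fst (y k) = zpow T Tinv k (fst (y 0))"
proof (rule orbit_eq_zpow[OF homeo])
  show "fst (y k) \<in> C" for k
    using orbit_in_X[of k] X_subset by auto
  show "fst (y (k + 1)) = T (fst (y k))" for k
    using fst_f[of "y k"] orbit_step[of k] by simp
qed

lemma graph_subset_closure_orbit:
  assumes "x \<in> C" and "x \<noteq> x0" and "m \<ge> 1"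
    and orbit_in_X: "\<And>k. y k \<in> X" and fst_y: "\<And>k. fst (y k) = zpow T Tinv k x"
  shows "graph \<subseteq> closure {y (int m * k) | k. True}"
proof
  fix p
  assume "p \<in> graph"
  then obtain z where p: "p = (z, N z mod 2)" and "z \<in> U"
    by blast
  show "p \<in> closure {y (int m * k) | k. True}"
    unfolding p mem_closure_Times_discrete_iff
  proof (intro allI impI)
    fix e :: real
    assume "e > 0"
    obtain e0 where "e0 > 0" and e0: "\<And>w. w \<in> C \<Longrightarrow> dist w z < e0 \<Longrightarrow> w \<in> U \<and> N w = N z"
      using N_locally_constant[OF \<open>z \<in> U\<close>] by blast
    have "z \<in> closure {zpow T Tinv (int m * k) x | k. True}"
      using minimal[OF assms(1-3)] \<open>z \<in> U\<close> U_subset by auto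
    moreover have "min e e0 > 0"
      using \<open>e > 0\<close> \<open>e0 > 0\<close> by simp
    ultimately obtain k where close: "dist (zpow T Tinv (int m * k) x) z < min e e0"
      unfolding closure_approachable by blast
    define q where "q = zpow T Tinv (int m * k) x"
    have "q \<in> U" and "N q = N z"
      using e0 close zpow_in_homeomorphism[OF homeo \<open>x \<in> C\<close>] by (auto simp: q_def)
    have y_eq: "y (int m * k) = (q, snd (y (int m * k)))"
      by (simp add: prod_eq_iff q_def fst_y)
    have "(q, snd (y (int m * k))) \<in> X"
      unfolding y_eq[symmetric] by (rule orbit_in_X)
    then have "snd (y (int m * k)) = N z mod 2"
      using X_fibre_over_U[OF _ \<open>q \<in> U\<close>] \<open>N q = N z\<close> by simp
    then have "(q, N z mod 2) \<in> {y (int m * k) | k. True}"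
      using y_eq by (intro CollectI exI[of _ k]) simp
    moreover have "dist q z < e"
      using close by (simp add: q_def)
    ultimately show "\<exists>v. (v, N z mod 2) \<in> {y (int m * k) | k. True} \<and> dist v z < e"
      by blast
  qed
qed

lemma orbit_dense:
  assumes "(x, i) \<in> X" and "x \<noteq> x0" and "m \<ge> 1"
    and orbit_in_X: "\<And>k. y k \<in> X" and "y 0 = (x, i)" and orbit_step: "\<And>k. f (y k) = y (k + 1)"
  shows "closure {y (int m * k) | k. True} = X"
proof
  have "x \<in> C"
    using assms(1) X_subset by auto
  have "fst (y k) = zpow T Tinv k x" for k
    using fst_orbit_eq_zpow[of y, OF orbit_in_X orbit_step] \<open>y 0 = (x, i)\<close> by simp
  then have "graph \<subseteq> closure {y (int m * k) | k. True}"
    by (rule graph_subset_closure_orbit[OF \<open>x \<in> C\<close> assms(2,3) orbit_in_X])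
  then show "X \<subseteq> closure {y (int m * k) | k. True}"
    unfolding X_eq_closure by (simp add: closure_minimal)
  show "closure {y (int m * k) | k. True} \<subseteq> X"
    using orbit_in_X unfolding X_eq_closure by (intro closure_minimal) auto
qed

end

theorem lemma7p3:
  fixes T Tinv :: "real \<Rightarrow> real" and x0 :: real and A B :: "real set"
  assumes homeo: "homeomorphism cantor_set cantor_set T Tinv"
    and fix0: "x0 \<in> cantor_set" "T x0 = x0"
    and fix_unique: "\<And>x. x \<in> cantor_set \<Longrightarrow> T x = x \<Longrightarrow> x = x0"
    and minimal: "\<And>x m. x \<in> cantor_set \<Longrightarrow> x \<noteq> x0 \<Longrightarrow> m \<ge> (1::nat) \<Longrightarrow>
         cantor_set \<subseteq> closure {zpow T Tinv (int m * k) x | k::int. True}"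
    and part: "A \<union> B = cantor_set" "A \<inter> B = {}"
    and A_clopen: "openin (top_of_set cantor_set) A" "closedin (top_of_set cantor_set) A"
    and B_clopen: "openin (top_of_set cantor_set) B" "closedin (top_of_set cantor_set) B"
    and x0A: "x0 \<in> A"
  shows "skew_f A T ` X_set Tinv B = X_set Tinv B \<and>
    (\<forall>x i. (x, i) \<in> X_set Tinv B \<longrightarrow> x \<noteq> x0 \<longrightarrow>
      (\<forall>m::nat. m \<ge> 1 \<longrightarrow>
        (\<forall>y :: int \<Rightarrow> real \<times> nat.
           (\<forall>k. y k \<in> X_set Tinv B) \<and> y 0 = (x, i) \<and> (\<forall>k. skew_f A T (y k) = y (k + 1))
           \<longrightarrow> closure {y (int m * k) | k. True} = X_set Tinv B)))"
proof -
  interpret skew_extension T Tinv x0 A B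
    by unfold_locales (fact homeo minimal part A_clopen(1) B_clopen(1) x0A)+
  show ?thesis
  proof (intro conjI allI impI)
    show "f ` X = X"
      by (rule f_X_eq)
  next
    fix x i and m :: nat and y :: "int \<Rightarrow> real \<times> nat"
    assume "(x, i) \<in> X" "x \<noteq> x0" "1 \<le> m"
      and "(\<forall>k. y k \<in> X) \<and> y 0 = (x, i) \<and> (\<forall>k. f (y k) = y (k + 1))"
    then show "closure {y (int m * k) | k. True} = X"
      using orbit_dense[of x i m y] by blast
  qed
qed

end
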